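(* Let $D$ be an odd prime. For any $\varepsilon>0$ there exist $c,\rho>0$ such that the following holds. Let $n=H+2L$ with $H\le \rho n$, let $\delta$ be a random $2n\times 2n$ boundary operator (as defined in the context) with these parameters, and consider $\ker\delta\subseteq \mathbb{Z}_D^{2n}$. Then the probability that $\ker\delta$ contains a nonzero vector of weight less than $cn$ is $O(D^{(-1/2+\varepsilon)n})$ as $n\to\infty$.
   Context: $\mathbb{Z}_D$ is the field with $D$ elements. Let $\delta_0$ be the $n\times n$ matrix over $\mathbb{Z}_D$ which, in block form with row and column block sizes $H,L,L$ (in this order), has the identity $I_L$ in block position (2,3) and zero blocks elsewhere. A random $2n\times 2n$ boundary operator on $C=C_+\oplus C_-$, $C_\pm=\mathbb{Z}_D^n$, is $\delta=\begin{bmatrix}U_+&0\\0&U_-\end{bmatrix}\begin{bmatrix}0&\delta_0\\ \delta_0&0\end{bmatrix}\begin{bmatrix}U_+^{-1}&0\\0&U_-^{-1}\end{bmatrix}$, where $U_+,U_-$ are independent and uniformly distributed in $\mathrm{GL}(n,\mathbb{Z}_D)$. The weight of a vector is the number of its nonzero coordinates in the standard basis. *)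

theory Defs
  imports "Jordan_Normal_Form.Matrix_Kernel" "Berlekamp_Zassenhaus.Finite_Field"
begin

(* Z_D is the type 'p mod_ring with D = CARD('p) prime (class prime_card). *)

definition GL :: "nat \<Rightarrow> 'a::prime_card mod_ring mat set" where
  "GL n = {U \<in> carrier_mat n n. invertible_mat U}"

definition minv :: "'a::field mat \<Rightarrow> 'a mat" where
  "minv U = (SOME V. V \<in> carrier_mat (dim_row U) (dim_row U) \<and>
                     U * V = 1\<^sub>m (dim_row U) \<and> V * U = 1\<^sub>m (dim_row U))"

(* n x n matrix, n = H+2L, block sizes H,L,L: identity I_L in block (2,3) *)
definition delta0 :: "nat \<Rightarrow> nat \<Rightarrow> 'a::field mat" where
  "delta0 H L = mat (H + 2*L) (H + 2*L)
     (\<lambda>(i,j). if H \<le> i \<and> i < H + L \<and> j = i + L then 1 else 0)"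

definition boundary_op :: "nat \<Rightarrow> nat \<Rightarrow> 'a::field mat \<Rightarrow> 'a mat \<Rightarrow> 'a mat" where
  "boundary_op H L Up Um =
     (let n = H + 2*L in
      four_block_mat Up (0\<^sub>m n n) (0\<^sub>m n n) Um
      * four_block_mat (0\<^sub>m n n) (delta0 H L) (delta0 H L) (0\<^sub>m n n)
      * four_block_mat (minv Up) (0\<^sub>m n n) (0\<^sub>m n n) (minv Um))"

definition weight :: "'a::zero vec \<Rightarrow> nat" where
  "weight v = card {i. i < dim_vec v \<and> v $ i \<noteq> 0}"

definition bad_prob :: "'p::prime_card itself \<Rightarrow> nat \<Rightarrow> nat \<Rightarrow> real \<Rightarrow> real" where
  "bad_prob _ H L c =
     (let n = H + 2*L in
      real (card {(Up, Um). Up \<in> (GL n :: 'p mod_ring mat set) \<and> Um \<in> GL n \<and>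
         (\<exists>v \<in> mat_kernel (boundary_op H L Up Um).
             v \<noteq> 0\<^sub>v (2*n) \<and> real (weight v) < c * real n)})
      / real (card (GL n :: 'p mod_ring mat set)) ^ 2)"

end

theory Submission
  imports Defs "Berlekamp_Zassenhaus.Berlekamp_Type_Based" "HOL-Real_Asymp.Real_Asymp"
begin

(* Write a kernel vector as v = (x, y). Since U+ and U- are invertible, delta v = 0 says exactly
   delta0 (U+^-1 x) = 0 and delta0 (U-^-1 y) = 0, and a nonzero v of weight < cn has a nonzero
   half of weight < cn. So the bad event forces U+ or U- into the set of U in GL(n) for which
   U^-1 maps some nonzero low-weight x into ker delta0, which has D^(H+L) elements.
   For fixed x <> 0, at most D^(n(n-1)) |T| matrices W satisfy W x : T, and (D >= 3) at least
   half of all D^(n^2) matrices are invertible; so each x contributes probability at most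
   2 D^(-L). A union bound over the at most D^(cn) c^(-cn) (1+c)^n = exp (n c (ln D + 1 - ln c))
   low-weight vectors costs only a factor D^(eps n/2) once c is small, and with rho = eps we have
   L >= (1 - eps) n/2. *)

section \<open>Inverses of invertible matrices\<close>

lemma minv_inverse:
  fixes U :: "'a::field mat"
  assumes "U \<in> carrier_mat n n" and "invertible_mat U"
  shows minv_carrier: "minv U \<in> carrier_mat n n"
    and "U * minv U = 1\<^sub>m n"
    and "minv U * U = 1\<^sub>m n"
proof -
  from assms obtain B where B1: "U * B = 1\<^sub>m n" and B2: "B * U = 1\<^sub>m (dim_row B)"
    unfolding invertible_mat_def inverts_mat_def by auto
  have "B \<in> carrier_mat n n"
    using arg_cong[OF B1, of dim_col] arg_cong[OF B2, of dim_col] assms(1) by auto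
  then have "\<exists>V. V \<in> carrier_mat (dim_row U) (dim_row U) \<and>
      U * V = 1\<^sub>m (dim_row U) \<and> V * U = 1\<^sub>m (dim_row U)"
    using B1 B2 assms(1) by (intro exI[of _ B]) auto
  from someI_ex[OF this] assms(1)
  show "minv U \<in> carrier_mat n n" "U * minv U = 1\<^sub>m n" "minv U * U = 1\<^sub>m n"
    unfolding minv_def by auto
qed

lemma invertible_mat_minv:
  fixes U :: "'a::field mat"
  assumes "U \<in> carrier_mat n n" and "invertible_mat U"
  shows "invertible_mat (minv U)"
  unfolding invertible_mat_def inverts_mat_def square_mat.simps
  using minv_inverse[OF assms] assms(1) by (intro conjI exI[of _ U]) auto

lemma minv_minv:
  fixes U :: "'a::field mat"
  assumes U: "U \<in> carrier_mat n n" and inv: "invertible_mat U"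
  shows "minv (minv U) = U"
proof -
  note m = minv_inverse[OF U inv]
  note mm = minv_inverse[OF minv_carrier[OF U inv] invertible_mat_minv[OF U inv]]
  have "minv (minv U) = (U * minv U) * minv (minv U)" using m mm by simp
  also have "\<dots> = U * (minv U * minv (minv U))"
    using m mm U by (intro assoc_mult_mat[of _ n n _ n _ n]) auto
  also have "\<dots> = U" using mm U by simp
  finally show ?thesis .
qed

lemma invertible_mat_of_det_nonzero:
  fixes W :: "'a::field mat"
  assumes W: "W \<in> carrier_mat n n" and "det W \<noteq> 0"
  shows "invertible_mat W"
proof -
  have "W \<in> Units (ring_mat TYPE('a) n ())" by (rule det_non_zero_imp_unit[OF assms])
  then obtain B where "B \<in> carrier_mat n n" "B * W = 1\<^sub>m n" "W * B = 1\<^sub>m n"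
    unfolding Units_def by (auto simp: ring_mat_simps)
  then show ?thesis unfolding invertible_mat_def inverts_mat_def
    using W by (intro conjI exI[of _ B]) auto
qed

lemma mult_mat_vec_zero[simp]: "A \<in> carrier_mat n m \<Longrightarrow> (A :: 'a::field mat) *\<^sub>v 0\<^sub>v m = 0\<^sub>v n"
  by (intro eq_vecI) (auto simp: scalar_prod_def)

lemma zero_vec_append: "(0\<^sub>v (n + m) :: 'a::zero vec) = 0\<^sub>v n @\<^sub>v 0\<^sub>v m"
  by (intro eq_vecI) auto

lemma invertible_mat_mult_vec_eq_0:
  fixes U :: "'a::field mat"
  assumes U: "U \<in> carrier_mat n n" "invertible_mat U" and w: "w \<in> carrier_vec n"
    and "U *\<^sub>v w = 0\<^sub>v n"
  shows "w = 0\<^sub>v n"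
proof -
  note m = minv_inverse[OF U]
  have "w = (minv U * U) *\<^sub>v w" using m w by simp
  also have "\<dots> = minv U *\<^sub>v (U *\<^sub>v w)"
    using m U w by (intro assoc_mult_mat_vec[of _ n n _ n]) auto
  also have "\<dots> = 0\<^sub>v n" using assms(4) m by simp
  finally show ?thesis .
qed

lemma exists_nonzero_index:
  assumes "v \<in> carrier_vec n" and "v \<noteq> 0\<^sub>v n"
  obtains i where "i < n" and "v $ i \<noteq> 0"
  using assms by (metis carrier_vecD eq_vecI index_zero_vec(1) index_zero_vec(2))

lemma GL_iff: "U \<in> GL n \<longleftrightarrow> U \<in> carrier_mat n n \<and> invertible_mat U"
  unfolding GL_def by simp

lemma minv_in_GL: "U \<in> GL n \<Longrightarrow> minv U \<in> GL n"
  unfolding GL_iff using minv_carrier invertible_mat_minv by blast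

lemma inj_on_minv_GL: "inj_on minv (GL n)"
  by (rule inj_onI) (metis GL_iff minv_minv)

section \<open>The kernel of the boundary operator\<close>

lemma delta0_carrier[simp]: "delta0 H L \<in> carrier_mat (H + 2*L) (H + 2*L)"
  unfolding delta0_def by auto

lemma delta0_mult_vec_index:
  assumes "z \<in> carrier_vec (H + 2*L)" and "H \<le> i" and "i < H + L"
  shows "(delta0 H L *\<^sub>v z) $ i = z $ (i + L)"
proof -
  have "(delta0 H L *\<^sub>v z) $ i = (\<Sum>j<H + 2*L. (if j = i + L then 1 else 0) * z $ j)"
    using assms by (simp add: delta0_def scalar_prod_def lessThan_atLeast0)
  also have "\<dots> = (\<Sum>j<H + 2*L. if j = i + L then z $ j else 0)"
    by (intro sum.cong) auto
  also have "\<dots> = z $ (i + L)" using assms(3) by simp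
  finally show ?thesis .
qed

lemma boundary_op_mult_append:
  fixes Up Um :: "'a::field mat"
  assumes n: "n = H + 2*L"
    and Up: "Up \<in> carrier_mat n n" "invertible_mat Up"
    and Um: "Um \<in> carrier_mat n n" "invertible_mat Um"
  shows boundary_op_carrier: "boundary_op H L Up Um \<in> carrier_mat (n + n) (n + n)"
    and "x \<in> carrier_vec n \<Longrightarrow> y \<in> carrier_vec n \<Longrightarrow> boundary_op H L Up Um *\<^sub>v (x @\<^sub>v y)
      = (Up *\<^sub>v (delta0 H L *\<^sub>v (minv Um *\<^sub>v y))) @\<^sub>v (Um *\<^sub>v (delta0 H L *\<^sub>v (minv Up *\<^sub>v x)))"
proof -
  note mp = minv_inverse[OF Up] and mm = minv_inverse[OF Um]
  have d: "(delta0 H L :: 'a mat) \<in> carrier_mat n n" using n by simp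
  define P where "P = four_block_mat Up (0\<^sub>m n n) (0\<^sub>m n n) Um"
  define B where "B = four_block_mat (0\<^sub>m n n) (delta0 H L :: 'a mat) (delta0 H L) (0\<^sub>m n n)"
  define Q where "Q = four_block_mat (minv Up) (0\<^sub>m n n) (0\<^sub>m n n) (minv Um)"
  have P: "P \<in> carrier_mat (n + n) (n + n)" unfolding P_def using Up Um by simp
  have B: "B \<in> carrier_mat (n + n) (n + n)" unfolding B_def using d by simp
  have Q: "Q \<in> carrier_mat (n + n) (n + n)" unfolding Q_def using mp mm by simp
  have bo: "boundary_op H L Up Um = P * B * Q"
    unfolding boundary_op_def Let_def n P_def B_def Q_def by simp
  show "boundary_op H L Up Um \<in> carrier_mat (n + n) (n + n)" unfolding bo using P B Q by simp
  assume x: "x \<in> carrier_vec n" and y: "y \<in> carrier_vec n"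
  have "boundary_op H L Up Um *\<^sub>v (x @\<^sub>v y) = P *\<^sub>v (B *\<^sub>v (Q *\<^sub>v (x @\<^sub>v y)))"
    unfolding bo using P B Q x y by (simp add: assoc_mult_mat_vec[of _ "n + n" "n + n" _ "n + n"])
  also have "Q *\<^sub>v (x @\<^sub>v y) = (minv Up *\<^sub>v x) @\<^sub>v (minv Um *\<^sub>v y)"
    unfolding Q_def using mp mm x y by (intro mult_mat_vec_split) auto
  also have "B *\<^sub>v \<dots> = (delta0 H L *\<^sub>v (minv Um *\<^sub>v y)) @\<^sub>v (delta0 H L *\<^sub>v (minv Up *\<^sub>v x))"
    unfolding B_def using mp mm x y d by (subst four_block_mat_mult_vec) auto
  also have "P *\<^sub>v \<dots> = (Up *\<^sub>v (delta0 H L *\<^sub>v (minv Um *\<^sub>v y)))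
      @\<^sub>v (Um *\<^sub>v (delta0 H L *\<^sub>v (minv Up *\<^sub>v x)))"
    unfolding P_def using mp mm x y d Up Um by (intro mult_mat_vec_split) auto
  finally show "boundary_op H L Up Um *\<^sub>v (x @\<^sub>v y) = \<dots>" .
qed

lemma mat_kernel_boundary_opD:
  fixes Up Um :: "'a::field mat"
  assumes n: "n = H + 2*L"
    and Up: "Up \<in> carrier_mat n n" "invertible_mat Up"
    and Um: "Um \<in> carrier_mat n n" "invertible_mat Um"
    and v: "v \<in> mat_kernel (boundary_op H L Up Um)"
  shows "v \<in> carrier_vec (n + n)"
    and "delta0 H L *\<^sub>v (minv Up *\<^sub>v vec_first v n) = 0\<^sub>v n"
    and "delta0 H L *\<^sub>v (minv Um *\<^sub>v vec_last v n) = 0\<^sub>v n"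
proof -
  note bc = boundary_op_carrier[OF n Up Um]
  note mp = minv_inverse[OF Up] and mm = minv_inverse[OF Um]
  show vc: "v \<in> carrier_vec (n + n)" using v bc unfolding mat_kernel_def by auto
  define x where "x = vec_first v n"
  define y where "y = vec_last v n"
  have x: "x \<in> carrier_vec n" and y: "y \<in> carrier_vec n" unfolding x_def y_def by auto
  have dx: "delta0 H L *\<^sub>v (minv Up *\<^sub>v x) \<in> carrier_vec n"
    and dy: "delta0 H L *\<^sub>v (minv Um *\<^sub>v y) \<in> carrier_vec n"
    using n mp(1) mm(1) x y by (metis delta0_carrier mult_mat_vec_carrier)+
  have "0\<^sub>v n @\<^sub>v 0\<^sub>v n = boundary_op H L Up Um *\<^sub>v (x @\<^sub>v y)"
    using v bc vc unfolding mat_kernel_def x_def y_def by (simp add: zero_vec_append)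
  also have "\<dots> = (Up *\<^sub>v (delta0 H L *\<^sub>v (minv Um *\<^sub>v y)))
      @\<^sub>v (Um *\<^sub>v (delta0 H L *\<^sub>v (minv Up *\<^sub>v x)))"
    using boundary_op_mult_append(2)[OF n Up Um x y] .
  finally have "0\<^sub>v n = Up *\<^sub>v (delta0 H L *\<^sub>v (minv Um *\<^sub>v y))
      \<and> 0\<^sub>v n = Um *\<^sub>v (delta0 H L *\<^sub>v (minv Up *\<^sub>v x))"
    using Up dy by (metis append_vec_eq mult_mat_vec_carrier zero_carrier_vec)
  with invertible_mat_mult_vec_eq_0[OF Up dy] invertible_mat_mult_vec_eq_0[OF Um dx]
  show "delta0 H L *\<^sub>v (minv Up *\<^sub>v vec_first v n) = 0\<^sub>v n"
    and "delta0 H L *\<^sub>v (minv Um *\<^sub>v vec_last v n) = 0\<^sub>v n"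
    unfolding x_def y_def by auto
qed

section \<open>Counting matrices over a finite field\<close>

lemma carrier_mat_eq_image_PiE:
  "carrier_mat n m = (\<lambda>f. mat n m f) ` (({0..<n} \<times> {0..<m}) \<rightarrow>\<^sub>E (UNIV :: 'a set))"
proof
  show "carrier_mat n m \<subseteq> (\<lambda>f. mat n m f) ` (({0..<n} \<times> {0..<m}) \<rightarrow>\<^sub>E (UNIV :: 'a set))"
  proof
    fix W :: "'a mat" assume "W \<in> carrier_mat n m"
    then have "W = mat n m (restrict (\<lambda>p. W $$ p) ({0..<n} \<times> {0..<m}))" by (intro eq_matI) auto
    moreover have "restrict (\<lambda>p. W $$ p) ({0..<n} \<times> {0..<m}) \<in> ({0..<n} \<times> {0..<m}) \<rightarrow>\<^sub>E UNIV"
      by simp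
    ultimately show "W \<in> (\<lambda>f. mat n m f) ` (({0..<n} \<times> {0..<m}) \<rightarrow>\<^sub>E UNIV)" by blast
  qed
qed auto

lemma card_carrier_mat: "card (carrier_mat n m :: 'a::finite mat set) = CARD('a) ^ (n * m)"
proof -
  have "inj_on (\<lambda>f. mat n m f) (({0..<n} \<times> {0..<m}) \<rightarrow>\<^sub>E (UNIV :: 'a set))"
  proof (rule inj_onI)
    fix f g assume f: "f \<in> ({0..<n} \<times> {0..<m}) \<rightarrow>\<^sub>E (UNIV :: 'a set)"
      and g: "g \<in> ({0..<n} \<times> {0..<m}) \<rightarrow>\<^sub>E (UNIV :: 'a set)" and e: "mat n m f = mat n m g"
    show "f = g"
    proof
      fix p show "f p = g p"
        using arg_cong[OF e, of "\<lambda>M. M $$ p"] PiE_arb[OF f] PiE_arb[OF g]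
        by (cases "p \<in> {0..<n} \<times> {0..<m}") auto
    qed
  qed
  then show ?thesis
    by (simp add: carrier_mat_eq_image_PiE card_image card_funcsetE card_cartesian_product)
qed

lemma finite_carrier_mat[simp]: "finite (carrier_mat n m :: 'a::finite mat set)"
  by (rule card_ge_0_finite) (simp add: card_carrier_mat)

lemma card_supported_vecs_le:
  assumes "S \<subseteq> {0..<n}"
  shows "card {v \<in> carrier_vec n. \<forall>i<n. i \<notin> S \<longrightarrow> v $ i = (0::'a::{finite,zero})}
    \<le> CARD('a) ^ card S"
proof -
  have fS: "finite S" using assms finite_subset by blast
  let ?ext = "\<lambda>f. vec n (\<lambda>i. if i \<in> S then f i else 0)"
  have "{v \<in> carrier_vec n. \<forall>i<n. i \<notin> S \<longrightarrow> v $ i = (0::'a)} \<subseteq> ?ext ` (S \<rightarrow>\<^sub>E (UNIV :: 'a set))"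
  proof
    fix v assume v: "v \<in> {v \<in> carrier_vec n. \<forall>i<n. i \<notin> S \<longrightarrow> v $ i = (0::'a)}"
    then have "v = ?ext (restrict (\<lambda>i. v $ i) S)" by (intro eq_vecI) auto
    moreover have "restrict (\<lambda>i. v $ i) S \<in> S \<rightarrow>\<^sub>E UNIV" by simp
    ultimately show "v \<in> ?ext ` (S \<rightarrow>\<^sub>E UNIV)" by blast
  qed
  then have "card {v \<in> carrier_vec n. \<forall>i<n. i \<notin> S \<longrightarrow> v $ i = (0::'a)}
      \<le> card (S \<rightarrow>\<^sub>E (UNIV :: 'a set))"
    using fS by (meson card_image_le card_mono finite_PiE finite_imageI
        finite_class.finite_UNIV order_trans)
  then show ?thesis using fS by (simp add: card_funcsetE)
qed

lemma mat_eq_if_mult_vec_eq_off_column: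
  fixes W W' :: "'a::idom mat"
  assumes W: "W \<in> carrier_mat n n" and W': "W' \<in> carrier_mat n n"
    and x: "x \<in> carrier_vec n" and i: "i < n" "x $ i \<noteq> 0"
    and "W *\<^sub>v x = W' *\<^sub>v x"
    and off: "\<And>r j. r < n \<Longrightarrow> j < n \<Longrightarrow> j \<noteq> i \<Longrightarrow> W $$ (r, j) = W' $$ (r, j)"
  shows "W = W'"
proof (rule eq_matI)
  fix r j assume "r < dim_row W'" and "j < dim_col W'"
  then have r: "r < n" and j: "j < n" using W' by auto
  have split: "(M *\<^sub>v x) $ r = M $$ (r, i) * x $ i + (\<Sum>k\<in>{0..<n} - {i}. M $$ (r, k) * x $ k)"
    if "M \<in> carrier_mat n n" for M
    using that r i x by (simp add: scalar_prod_def sum.remove[of "{0..<n}" i])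
  have "(\<Sum>k\<in>{0..<n} - {i}. W $$ (r, k) * x $ k) = (\<Sum>k\<in>{0..<n} - {i}. W' $$ (r, k) * x $ k)"
    using off r by (intro sum.cong) auto
  then have "W $$ (r, i) = W' $$ (r, i)"
    using split[OF W] split[OF W'] assms(6) i(2) by auto
  then show "W $$ (r, j) = W' $$ (r, j)"
    using i off r j by (cases "j = i") auto
qed (use W W' in auto)

lemma card_mat_mult_vec_in_le:
  fixes x :: "'a::{finite,idom} vec"
  assumes x: "x \<in> carrier_vec n" "x \<noteq> 0\<^sub>v n" and T: "T \<subseteq> carrier_vec n"
  shows "card {W \<in> carrier_mat n n. W *\<^sub>v x \<in> T} \<le> CARD('a) ^ (n * (n - 1)) * card T"
proof -
  obtain i where i: "i < n" "x $ i \<noteq> 0" using exists_nonzero_index[OF x] .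
  define E where "E = {0..<n} \<times> ({0..<n} - {i})"
  let ?S = "{W \<in> carrier_mat n n. W *\<^sub>v x \<in> T}"
  let ?code = "\<lambda>W :: 'a mat. (restrict (\<lambda>p. W $$ p) E, W *\<^sub>v x)"
  have "inj_on ?code ?S"
  proof (rule inj_onI)
    fix W W' assume W: "W \<in> ?S" and W': "W' \<in> ?S" and e: "?code W = ?code W'"
    have "W $$ p = W' $$ p" if "p \<in> E" for p
      using fun_cong[OF arg_cong[OF e, of fst], of p] that by simp
    with W W' e show "W = W'"
      by (intro mat_eq_if_mult_vec_eq_off_column[OF _ _ x(1) i]) (auto simp: E_def)
  qed
  moreover have "?code ` ?S \<subseteq> (E \<rightarrow>\<^sub>E UNIV) \<times> T" by auto
  moreover have "finite T" using T finite_carrier_vec finite_subset by blast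
  ultimately have "card ?S \<le> card ((E \<rightarrow>\<^sub>E (UNIV :: 'a set)) \<times> T)"
    by (intro card_inj_on_le) (auto simp: E_def intro!: finite_PiE)
  also have "\<dots> = CARD('a) ^ (n * (n - 1)) * card T"
    using i by (simp add: E_def card_cartesian_product card_funcsetE)
  finally show ?thesis .
qed

lemma card_null_pairs_le:
  "card {(W, x). W \<in> carrier_mat n n \<and> x \<in> carrier_vec n - {0\<^sub>v n}
      \<and> W *\<^sub>v x = (0\<^sub>v n :: 'a::{finite,idom} vec)} \<le> CARD('a) ^ (n * n)"
proof -
  let ?V0 = "carrier_vec n - {0\<^sub>v n} :: 'a vec set"
  let ?F = "\<lambda>x. {W \<in> carrier_mat n n. W *\<^sub>v x \<in> {0\<^sub>v n :: 'a vec}}"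
  have "{(W, x). W \<in> carrier_mat n n \<and> x \<in> ?V0 \<and> W *\<^sub>v x = 0\<^sub>v n} = (\<Union>x\<in>?V0. (\<lambda>W. (W, x)) ` ?F x)"
    by auto
  then have "card {(W, x). W \<in> carrier_mat n n \<and> x \<in> ?V0 \<and> W *\<^sub>v x = 0\<^sub>v n}
      \<le> (\<Sum>x\<in>?V0. card ((\<lambda>W. (W, x)) ` ?F x))"
    by (simp add: card_UN_le)
  also have "\<dots> \<le> (\<Sum>x\<in>?V0. CARD('a) ^ (n * (n - 1)))"
  proof (rule sum_mono)
    fix x assume "x \<in> ?V0"
    then show "card ((\<lambda>W. (W, x)) ` ?F x) \<le> CARD('a) ^ (n * (n - 1))"
      using card_mat_mult_vec_in_le[of x n "{0\<^sub>v n}"] card_image_le[of "?F x" "\<lambda>W. (W, x)"] by simp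
  qed
  also have "\<dots> \<le> CARD('a) ^ n * CARD('a) ^ (n * (n - 1))"
    by (simp add: card_Diff_singleton card_carrier_vec)
  also have "\<dots> = CARD('a) ^ (n * n)"
    by (cases n) (simp_all add: power_add[symmetric] algebra_simps)
  finally show ?thesis .
qed

lemma singular_mat_null_vec:
  fixes W :: "'a::field mat"
  assumes "W \<in> carrier_mat n n" and "\<not> invertible_mat W"
  shows "\<exists>v. v \<in> carrier_vec n \<and> v \<noteq> 0\<^sub>v n \<and> W *\<^sub>v v = 0\<^sub>v n"
  using assms invertible_mat_of_det_nonzero det_0_iff_vec_prod_zero_field by blast

lemma smult_vec_right_cancel:
  fixes k :: "'a::idom vec"
  assumes "k \<in> carrier_vec n" and "k \<noteq> 0\<^sub>v n"
  shows "a \<cdot>\<^sub>v k = b \<cdot>\<^sub>v k \<longleftrightarrow> a = b"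
proof
  obtain j where "j < n" "k $ j \<noteq> 0" using exists_nonzero_index[OF assms] .
  then show "a \<cdot>\<^sub>v k = b \<cdot>\<^sub>v k \<Longrightarrow> a = b"
    using assms(1) by (metis carrier_vecD index_smult_vec(1) mult_cancel_right)
qed simp

lemma card_singular_mat_le:
  "(CARD('a::{finite,field}) - 1) * card {W \<in> carrier_mat n n. \<not> invertible_mat (W :: 'a mat)}
    \<le> CARD('a) ^ (n * n)"
proof -
  let ?S = "{W \<in> carrier_mat n n. \<not> invertible_mat (W :: 'a mat)}"
  define k where "k W = (SOME v. v \<in> carrier_vec n \<and> v \<noteq> 0\<^sub>v n \<and> W *\<^sub>v v = 0\<^sub>v n)" for W :: "'a mat"
  have k: "k W \<in> carrier_vec n" "k W \<noteq> 0\<^sub>v n" "W *\<^sub>v k W = 0\<^sub>v n" if "W \<in> ?S" for W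
    using someI_ex[OF singular_mat_null_vec[of W n]] that unfolding k_def by auto
  let ?f = "\<lambda>(W, a). (W, a \<cdot>\<^sub>v k W)"
  let ?P = "{(W, x). W \<in> carrier_mat n n \<and> x \<in> carrier_vec n - {0\<^sub>v n}
    \<and> W *\<^sub>v x = (0\<^sub>v n :: 'a vec)}"
  have "inj_on ?f (?S \<times> (UNIV - {0}))"
    by (rule inj_onI) (auto simp: smult_vec_right_cancel[OF k(1,2)])
  moreover have "?f (W, a) \<in> ?P" if W: "W \<in> ?S" and "a \<noteq> 0" for W a
  proof -
    have "a \<cdot>\<^sub>v k W \<noteq> 0 \<cdot>\<^sub>v k W" using that smult_vec_right_cancel[OF k(1,2)] by blast
    moreover have "W *\<^sub>v (a \<cdot>\<^sub>v k W) = a \<cdot>\<^sub>v (W *\<^sub>v k W)"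
      using W k(1)[OF W] by (intro mult_mat_vec) auto
    ultimately show ?thesis using W k[OF W] by auto
  qed
  moreover have "finite ?P"
    by (rule finite_subset[of _ "carrier_mat n n \<times> carrier_vec n"]) auto
  ultimately have "card (?S \<times> (UNIV - {0 :: 'a})) \<le> card ?P"
    by (intro card_inj_on_le[of ?f]) auto
  also have "\<dots> \<le> CARD('a) ^ (n * n)" by (rule card_null_pairs_le)
  finally show ?thesis by (simp add: card_cartesian_product card_Diff_singleton mult.commute)
qed

lemma card_invertible_mat_ge:
  assumes "CARD('a::{finite,field}) \<ge> 3"
  shows "CARD('a) ^ (n * n) \<le> 2 * card {U \<in> carrier_mat n n. invertible_mat (U :: 'a mat)}"
proof -
  let ?G = "{U \<in> carrier_mat n n. invertible_mat (U :: 'a mat)}"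
  let ?S = "{U \<in> carrier_mat n n. \<not> invertible_mat (U :: 'a mat)}"
  have "carrier_mat n n = ?G \<union> ?S" by auto
  then have total: "CARD('a) ^ (n * n) = card ?G + card ?S"
    by (metis (no_types, lifting) card_Un_disjoint card_carrier_mat disjoint_iff finite_Un
        finite_carrier_mat mem_Collect_eq)
  have "2 * card ?S \<le> (CARD('a) - 1) * card ?S" using assms by (intro mult_right_mono) auto
  with card_singular_mat_le[where 'a='a, of n] total show ?thesis by linarith
qed

section \<open>Counting vectors of low weight\<close>

lemma sum_Pow_power_card:
  fixes c :: "'a::comm_semiring_1"
  assumes "finite A"
  shows "(\<Sum>S\<in>Pow A. c ^ card S) = (1 + c) ^ card A"
  using prod_add[OF assms, of "\<lambda>_. c" "\<lambda>_. 1"] by (simp add: add.commute)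

(* Rankin's trick: every subset of size at most t has weight c^(|S| - t) >= 1. *)
lemma card_small_subsets_le:
  fixes c t :: real
  assumes A: "finite A" and c: "0 < c" "c \<le> 1"
  shows "real (card {S \<in> Pow A. real (card S) \<le> t}) \<le> c powr (- t) * (1 + c) ^ card A"
proof -
  let ?small = "{S \<in> Pow A. real (card S) \<le> t}"
  have "real (card ?small) = (\<Sum>S\<in>?small. 1)" by simp
  also have "\<dots> \<le> (\<Sum>S\<in>?small. c powr (real (card S) - t))"
  proof (rule sum_mono)
    fix S assume "S \<in> ?small"
    then have "0 \<le> (real (card S) - t) * ln c" using c by (intro mult_nonpos_nonpos) auto
    then show "1 \<le> c powr (real (card S) - t)" using c by (simp add: powr_def)
  qed
  also have "\<dots> \<le> (\<Sum>S\<in>Pow A. c powr (real (card S) - t))"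
    using A by (intro sum_mono2) auto
  also have "\<dots> = c powr (- t) * (\<Sum>S\<in>Pow A. c ^ card S)"
    using c by (simp add: sum_distrib_left powr_diff powr_realpow powr_minus divide_inverse
        mult.commute)
  also have "\<dots> = c powr (- t) * (1 + c) ^ card A" using A by (simp add: sum_Pow_power_card)
  finally show ?thesis .
qed

definition low_weight_vecs :: "nat \<Rightarrow> real \<Rightarrow> 'a::zero vec set" where
  "low_weight_vecs n c = {x \<in> carrier_vec n. x \<noteq> 0\<^sub>v n \<and> real (weight x) < c * real n}"

lemma finite_low_weight_vecs[simp]: "finite (low_weight_vecs n c :: 'a::{finite,zero} vec set)"
  unfolding low_weight_vecs_def by simp

lemma card_low_weight_vecs_le:
  assumes c: "0 < c" "c \<le> 1"
  shows "real (card (low_weight_vecs n c :: 'a::{finite,zero} vec set))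
    \<le> real CARD('a) powr (c * real n) * (c powr (- (c * real n)) * (1 + c) ^ n)"
proof -
  define D where "D = real CARD('a)"
  define small where "small = {S \<in> Pow {0..<n}. real (card S) \<le> c * real n}"
  define supp where "supp S = {v \<in> carrier_vec n. \<forall>i<n. i \<notin> S \<longrightarrow> v $ i = (0::'a)}" for S
  have "low_weight_vecs n c \<subseteq> (\<Union>S\<in>small. supp S)"
  proof
    fix x :: "'a vec" assume x: "x \<in> low_weight_vecs n c"
    let ?S = "{i. i < n \<and> x $ i \<noteq> 0}"
    have "weight x = card ?S" using x unfolding weight_def low_weight_vecs_def by auto
    then have "?S \<in> small" using x unfolding small_def low_weight_vecs_def by auto
    moreover have "x \<in> supp ?S" using x unfolding supp_def low_weight_vecs_def by auto
    ultimately show "x \<in> (\<Union>S\<in>small. supp S)" by blast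
  qed
  then have "card (low_weight_vecs n c :: 'a vec set) \<le> card (\<Union>S\<in>small. supp S)"
    by (intro card_mono) (auto simp: small_def supp_def)
  also have "\<dots> \<le> (\<Sum>S\<in>small. card (supp S))" by (rule card_UN_le) (simp add: small_def)
  also have "\<dots> \<le> (\<Sum>S\<in>small. CARD('a) ^ card S)"
    unfolding supp_def small_def by (intro sum_mono card_supported_vecs_le) auto
  finally have "real (card (low_weight_vecs n c :: 'a vec set))
      \<le> real (\<Sum>S\<in>small. CARD('a) ^ card S)"
    by (simp only: of_nat_le_iff)
  also have "\<dots> = (\<Sum>S\<in>small. D ^ card S)" by (simp add: D_def)
  also have "\<dots> \<le> (\<Sum>S\<in>small. D powr (c * real n))"
  proof (rule sum_mono)
    fix S assume "S \<in> small"
    then have "D powr real (card S) \<le> D powr (c * real n)"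
      unfolding small_def D_def by (intro powr_mono) auto
    then show "D ^ card S \<le> D powr (c * real n)" unfolding D_def by (simp add: powr_realpow)
  qed
  also have "\<dots> = D powr (c * real n) * real (card small)" by simp
  also have "\<dots> \<le> D powr (c * real n) * (c powr (- (c * real n)) * (1 + c) ^ n)"
    using card_small_subsets_le[of "{0..<n}" c "c * real n"] c
    unfolding small_def by (intro mult_left_mono) auto
  finally show ?thesis unfolding D_def .
qed

lemma card_low_weight_vecs_le_exp:
  assumes c: "0 < c" "c \<le> 1"
  shows "real (card (low_weight_vecs n c :: 'a::{finite,zero} vec set))
    \<le> exp (real n * (c * (ln (real CARD('a)) + 1 - ln c)))"
proof -
  define D where "D = real CARD('a)"
  have "(1 + c) ^ n \<le> exp c ^ n" using c by (intro power_mono) (auto simp: add.commute)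
  then have "(1 + c) ^ n \<le> exp (real n * c)" by (simp add: exp_of_nat_mult)
  then have "D powr (c * real n) * (c powr (- (c * real n)) * (1 + c) ^ n)
      \<le> exp (c * real n * ln D) * (exp (- (c * real n) * ln c) * exp (real n * c))"
    using c by (intro mult_mono) (auto simp: D_def powr_def)
  also have "\<dots> = exp (real n * (c * (ln D + 1 - ln c)))"
    by (simp add: exp_add[symmetric] algebra_simps)
  finally show ?thesis
    using card_low_weight_vecs_le[where 'a='a, OF c, of n] unfolding D_def by linarith
qed

section \<open>The union bound\<close>

lemma weight_vec_first_le: "v \<in> carrier_vec (n + m) \<Longrightarrow> weight (vec_first v n) \<le> weight v"
  unfolding weight_def by (rule card_mono) (auto simp: vec_first_def)

lemma weight_vec_last_le:
  assumes "v \<in> carrier_vec (n + m)"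
  shows "weight (vec_last v m) \<le> weight v"
proof -
  let ?S = "{i. i < m \<and> vec_last v m $ i \<noteq> 0}"
  have "card ?S = card ((+) n ` ?S)" by (rule card_image[symmetric]) auto
  also have "\<dots> \<le> card {i. i < dim_vec v \<and> v $ i \<noteq> 0}"
    using assms by (intro card_mono) (auto simp: vec_last_def)
  finally show ?thesis unfolding weight_def by simp
qed

lemma card_kernel_delta0_le:
  "card {z \<in> carrier_vec (H + 2*L). delta0 H L *\<^sub>v z = (0\<^sub>v (H + 2*L) :: 'a::{finite,field} vec)}
    \<le> CARD('a) ^ (H + L)"
proof -
  let ?n = "H + 2*L"
  have "{z \<in> carrier_vec ?n. delta0 H L *\<^sub>v z = (0\<^sub>v ?n :: 'a vec)}
      \<subseteq> {z \<in> carrier_vec ?n. \<forall>i<?n. i \<notin> {0..<H + L} \<longrightarrow> z $ i = 0}"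
  proof clarify
    fix z :: "'a vec" and i
    assume z: "z \<in> carrier_vec ?n" and "delta0 H L *\<^sub>v z = 0\<^sub>v ?n" and "i < ?n" "i \<notin> {0..<H + L}"
    then show "z $ i = 0" using delta0_mult_vec_index[OF z, of "i - L"] by auto
  qed
  then have "card {z \<in> carrier_vec ?n. delta0 H L *\<^sub>v z = (0\<^sub>v ?n :: 'a vec)}
      \<le> card {z \<in> carrier_vec ?n. \<forall>i<?n. i \<notin> {0..<H + L} \<longrightarrow> z $ i = (0 :: 'a)}"
    by (intro card_mono) auto
  also have "\<dots> \<le> CARD('a) ^ (H + L)"
    using card_supported_vecs_le[of "{0..<H + L}" ?n, where 'a='a] by simp
  finally show ?thesis .
qed

lemma finite_GL[simp]: "finite (GL n :: 'p::prime_card mod_ring mat set)"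
  by (rule finite_subset[of _ "carrier_mat n n :: 'p mod_ring mat set"]) (auto simp: GL_def)

lemma card_GL_ge:
  assumes "CARD('p::prime_card) \<ge> 3"
  shows "real CARD('p) ^ (n * n) \<le> 2 * real (card (GL n :: 'p mod_ring mat set))"
proof -
  have "CARD('p) ^ (n * n) \<le> 2 * card (GL n :: 'p mod_ring mat set)"
    using card_invertible_mat_ge[where 'a="'p mod_ring", of n] assms unfolding GL_def by simp
  then have "real (CARD('p) ^ (n * n)) \<le> real (2 * card (GL n :: 'p mod_ring mat set))"
    by (simp only: of_nat_le_iff)
  then show ?thesis by simp
qed

definition bad_GL :: "nat \<Rightarrow> nat \<Rightarrow> real \<Rightarrow> 'p::prime_card mod_ring mat set" where
  "bad_GL H L c = {U \<in> GL (H + 2*L). \<exists>x \<in> low_weight_vecs (H + 2*L) c.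
     delta0 H L *\<^sub>v (minv U *\<^sub>v x) = 0\<^sub>v (H + 2*L)}"

lemma bad_GL_subset: "bad_GL H L c \<subseteq> GL (H + 2*L)"
  unfolding bad_GL_def by auto

lemma finite_bad_GL[simp]: "finite (bad_GL H L c)"
  using finite_subset[OF bad_GL_subset finite_GL] .

lemma card_bad_GL_le:
  "card (bad_GL H L c :: 'p::prime_card mod_ring mat set)
    \<le> card (low_weight_vecs (H + 2*L) c :: 'p mod_ring vec set)
      * (CARD('p) ^ ((H + 2*L) * (H + 2*L - 1)) * CARD('p) ^ (H + L))"
proof -
  define n where "n = H + 2*L"
  let ?K = "{z \<in> carrier_vec n. delta0 H L *\<^sub>v z = (0\<^sub>v n :: 'p mod_ring vec)}"
  let ?Low = "low_weight_vecs n c :: 'p mod_ring vec set"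
  let ?F = "\<lambda>x. {U \<in> GL n. minv U *\<^sub>v x \<in> ?K}"
  have fiber: "card (?F x) \<le> CARD('p) ^ (n * (n - 1)) * CARD('p) ^ (H + L)" if x: "x \<in> ?Low" for x
  proof -
    have "inj_on minv (?F x)" by (rule inj_on_subset[OF inj_on_minv_GL]) auto
    then have "card (?F x) \<le> card {W \<in> carrier_mat n n. W *\<^sub>v x \<in> ?K}"
      using minv_in_GL by (intro card_inj_on_le[of minv]) (auto simp: GL_iff)
    also have "\<dots> \<le> CARD('p mod_ring) ^ (n * (n - 1)) * card ?K"
      using x by (intro card_mat_mult_vec_in_le) (auto simp: low_weight_vecs_def)
    also have "\<dots> \<le> CARD('p) ^ (n * (n - 1)) * CARD('p) ^ (H + L)"
      using card_kernel_delta0_le[of H L, where 'a="'p mod_ring"] unfolding n_def by simp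
    finally show ?thesis .
  qed
  have "bad_GL H L c \<subseteq> (\<Union>x\<in>?Low. ?F x)"
  proof
    fix U :: "'p mod_ring mat" assume "U \<in> bad_GL H L c"
    then obtain x where U: "U \<in> GL n" and x: "x \<in> ?Low" and "delta0 H L *\<^sub>v (minv U *\<^sub>v x) = 0\<^sub>v n"
      unfolding bad_GL_def n_def by auto
    moreover have "minv U *\<^sub>v x \<in> carrier_vec n"
      using minv_carrier[of U n] U x by (auto simp: GL_iff low_weight_vecs_def)
    ultimately show "U \<in> (\<Union>x\<in>?Low. ?F x)" by auto
  qed
  then have "card (bad_GL H L c :: 'p mod_ring mat set) \<le> card (\<Union>x\<in>?Low. ?F x)"
    by (intro card_mono) auto
  also have "\<dots> \<le> (\<Sum>x\<in>?Low. card (?F x))"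
    using finite_low_weight_vecs by (rule card_UN_le)
  also have "\<dots> \<le> card ?Low * (CARD('p) ^ (n * (n - 1)) * CARD('p) ^ (H + L))"
    using sum_mono[OF fiber] by simp
  finally show ?thesis unfolding n_def .
qed

lemma kernel_low_weight_imp_bad_GL:
  fixes Up Um :: "'p::prime_card mod_ring mat"
  assumes n: "n = H + 2*L" and Up: "Up \<in> GL n" and Um: "Um \<in> GL n"
    and v: "v \<in> mat_kernel (boundary_op H L Up Um)"
    and v0: "v \<noteq> 0\<^sub>v (2*n)" and w: "real (weight v) < c * real n"
  shows "Up \<in> bad_GL H L c \<or> Um \<in> bad_GL H L c"
proof -
  note ks = mat_kernel_boundary_opD[OF n Up[unfolded GL_iff, THEN conjunct1]
      Up[unfolded GL_iff, THEN conjunct2] Um[unfolded GL_iff, THEN conjunct1]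
      Um[unfolded GL_iff, THEN conjunct2] v]
  let ?x = "vec_first v n" and ?y = "vec_last v n"
  have wx: "real (weight ?x) < c * real n" and wy: "real (weight ?y) < c * real n"
    using weight_vec_first_le[OF ks(1)] weight_vec_last_le[OF ks(1)] w by linarith+
  have "?x @\<^sub>v ?y = v" using ks(1) by simp
  then have "?x \<noteq> 0\<^sub>v n \<or> ?y \<noteq> 0\<^sub>v n" using v0 by (auto simp: mult_2 zero_vec_append)
  then show ?thesis
  proof
    assume "?x \<noteq> 0\<^sub>v n"
    then show ?thesis using Up ks(2) wx
      unfolding bad_GL_def low_weight_vecs_def n[symmetric] by (auto intro!: exI[of _ ?x])
  next
    assume "?y \<noteq> 0\<^sub>v n"
    then show ?thesis using Um ks(3) wy
      unfolding bad_GL_def low_weight_vecs_def n[symmetric] by (auto intro!: exI[of _ ?y])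
  qed
qed

definition bad_pairs :: "nat \<Rightarrow> nat \<Rightarrow> real \<Rightarrow> ('p::prime_card mod_ring mat \<times> 'p mod_ring mat) set"
  where "bad_pairs H L c = {(Up, Um). Up \<in> GL (H + 2*L) \<and> Um \<in> GL (H + 2*L) \<and>
    (\<exists>v \<in> mat_kernel (boundary_op H L Up Um).
       v \<noteq> 0\<^sub>v (2 * (H + 2*L)) \<and> real (weight v) < c * real (H + 2*L))}"

lemma bad_prob_eq:
  "bad_prob TYPE('p::prime_card) H L c = real (card (bad_pairs H L c :: ('p mod_ring mat \<times> _) set))
    / real (card (GL (H + 2*L) :: 'p mod_ring mat set)) ^ 2"
  unfolding bad_prob_def bad_pairs_def Let_def by simp

lemma card_bad_pairs_le:
  "card (bad_pairs H L c :: ('p::prime_card mod_ring mat \<times> _) set)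
    \<le> 2 * (card (bad_GL H L c :: 'p mod_ring mat set) * card (GL (H + 2*L) :: 'p mod_ring mat set))"
proof -
  define Bad where "Bad = (bad_GL H L c :: 'p mod_ring mat set)"
  define G where "G = (GL (H + 2*L) :: 'p mod_ring mat set)"
  have "bad_pairs H L c \<subseteq> Bad \<times> G \<union> G \<times> Bad"
    unfolding bad_pairs_def Bad_def G_def using kernel_low_weight_imp_bad_GL[OF refl] by blast
  then have "card (bad_pairs H L c :: ('p mod_ring mat \<times> _) set) \<le> card (Bad \<times> G \<union> G \<times> Bad)"
    by (intro card_mono) (auto simp: Bad_def G_def)
  also have "\<dots> \<le> card (Bad \<times> G) + card (G \<times> Bad)" by (rule card_Un_le)
  also have "\<dots> = 2 * (card Bad * card G)" by (simp add: card_cartesian_product)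
  finally show ?thesis unfolding Bad_def G_def .
qed

lemma bad_prob_le:
  assumes "CARD('p::prime_card) \<ge> 3"
  shows "bad_prob TYPE('p) H L c
    \<le> 4 * real (card (low_weight_vecs (H + 2*L) c :: 'p mod_ring vec set)) / real CARD('p) ^ L"
proof -
  define n where "n = H + 2*L"
  define D where "D = real CARD('p)"
  define G where "G = real (card (GL n :: 'p mod_ring mat set))"
  define M where "M = D ^ (n * (n - 1)) * D ^ (H + L)"
  let ?Low = "real (card (low_weight_vecs n c :: 'p mod_ring vec set))"
  have D: "0 < D" unfolding D_def by simp
  have M: "0 < M" using D unfolding M_def by simp
  have MD: "M * D ^ L = D ^ (n * n)"
  proof -
    have "n * (n - 1) + (H + L) + L = n * n"
      unfolding n_def by (cases "H + 2*L") (auto simp: algebra_simps)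
    then show ?thesis unfolding M_def by (metis power_add)
  qed
  have DG: "D ^ (n * n) \<le> 2 * G" using card_GL_ge[OF assms, of n] unfolding D_def G_def .
  moreover have "0 < D ^ (n * n)" using D by simp
  ultimately have G: "0 < G" by linarith
  have "real (card (bad_GL H L c :: 'p mod_ring mat set)) \<le> ?Low * M"
  proof -
    have "real (card (bad_GL H L c :: 'p mod_ring mat set)) \<le> real (card (low_weight_vecs n c
        :: 'p mod_ring vec set) * (CARD('p) ^ (n * (n - 1)) * CARD('p) ^ (H + L)))"
      using card_bad_GL_le[of H L c, where 'p='p] unfolding n_def by (intro of_nat_mono)
    then show ?thesis unfolding M_def D_def by simp
  qed
  then have "2 * (real (card (bad_GL H L c :: 'p mod_ring mat set)) * G) \<le> 2 * (?Low * M * G)"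
    using G by (intro mult_left_mono mult_right_mono) auto
  moreover have "real (card (bad_pairs H L c :: ('p mod_ring mat \<times> _) set))
      \<le> real (2 * (card (bad_GL H L c :: 'p mod_ring mat set)
        * card (GL n :: 'p mod_ring mat set)))"
    using card_bad_pairs_le[of H L c, where 'p='p] unfolding n_def by (intro of_nat_mono)
  ultimately have B:
      "real (card (bad_pairs H L c :: ('p mod_ring mat \<times> _) set)) \<le> 2 * (?Low * M) * G"
    unfolding G_def by simp
  have "bad_prob TYPE('p) H L c \<le> 2 * (?Low * M) * G / G ^ 2"
    unfolding bad_prob_eq n_def[symmetric] G_def[symmetric]
    using B by (intro divide_right_mono) auto
  also have "\<dots> = 2 * (?Low * M) / G" using G by (simp add: power2_eq_square)
  also have "\<dots> \<le> 2 * (?Low * M) / (D ^ (n * n) / 2)"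
    using DG G M \<open>0 < D ^ (n * n)\<close> by (intro divide_left_mono) auto
  also have "\<dots> = 4 * ?Low / D ^ L" using M D unfolding MD[symmetric] by (simp add: field_simps)
  finally show ?thesis unfolding n_def D_def .
qed

lemma bad_prob_le_powr:
  fixes \<epsilon> c :: real
  assumes D3: "CARD('p::prime_card) \<ge> 3" and c: "0 < c" "c \<le> 1"
    and rate: "c * (ln (real CARD('p)) + 1 - ln c) \<le> \<epsilon> * ln (real CARD('p)) / 2"
    and H: "real H \<le> \<epsilon> * real (H + 2*L)"
  shows "bad_prob TYPE('p) H L c \<le> 4 * real CARD('p) powr ((-1/2 + \<epsilon>) * real (H + 2*L))"
proof -
  define D where "D = real CARD('p)"
  define n where "n = real (H + 2*L)"
  have lnD: "0 < ln D" using D3 unfolding D_def by simp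
  have "bad_prob TYPE('p) H L c
      \<le> 4 * real (card (low_weight_vecs (H + 2*L) c :: 'p mod_ring vec set)) / D ^ L"
    using bad_prob_le[OF D3] unfolding D_def .
  also have "\<dots> \<le> 4 * exp (n * (c * (ln D + 1 - ln c))) / D ^ L"
    using card_low_weight_vecs_le_exp[where 'a="'p mod_ring", OF c, of "H + 2*L"]
    by (intro divide_right_mono mult_left_mono) (auto simp: D_def n_def)
  also have "\<dots> \<le> 4 * exp (n * (\<epsilon> * ln D / 2)) / D ^ L"
  proof -
    have "n * (c * (ln D + 1 - ln c)) \<le> n * (\<epsilon> * ln D / 2)"
      using rate unfolding D_def n_def by (intro mult_left_mono) auto
    then show ?thesis by (intro divide_right_mono mult_left_mono) (auto simp: D_def)
  qed
  also have "\<dots> = 4 * exp (n * (\<epsilon> * ln D / 2) - real L * ln D)"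
    using D3 by (simp add: D_def exp_diff exp_of_nat_mult)
  also have "\<dots> \<le> 4 * exp ((-1/2 + \<epsilon>) * n * ln D)"
  proof -
    have "(1 - \<epsilon>) * n / 2 * ln D \<le> real L * ln D"
      using H lnD unfolding n_def by (intro mult_right_mono) (auto simp: algebra_simps)
    then show ?thesis by (simp add: algebra_simps)
  qed
  also have "\<dots> = 4 * D powr ((-1/2 + \<epsilon>) * n)" using lnD by (simp add: powr_def D_def)
  finally show ?thesis unfolding D_def n_def .
qed

lemma exists_small_entropy_rate:
  fixes a t :: real
  assumes "0 < t"
  shows "\<exists>c. 0 < c \<and> c < 1 \<and> c * (a + 1 - ln c) < t"
proof -
  have "((\<lambda>c. c * (a + 1 - ln c)) \<longlongrightarrow> 0) (at_right 0)" by real_asymp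
  then have "\<forall>\<^sub>F c in at_right 0. c * (a + 1 - ln c) < t"
    using assms by (rule order_tendstoD(2))
  moreover have "\<forall>\<^sub>F c in at_right (0::real). c < 1"
    unfolding eventually_at_right_field by (intro exI[of _ 1]) auto
  ultimately have "\<forall>\<^sub>F c in at_right 0. c * (a + 1 - ln c) < t \<and> c < 1"
    by (rule eventually_conj)
  then obtain b where "0 < b" and b: "\<And>c. 0 < c \<Longrightarrow> c < b \<Longrightarrow> c * (a + 1 - ln c) < t \<and> c < 1"
    unfolding eventually_at_right_field by auto
  then show ?thesis using b[of "b / 2"] by (intro exI[of _ "b / 2"]) auto
qed

theorem lemma1:
  fixes \<epsilon> :: real
  assumes "CARD('p::prime_card) \<noteq> 2"
    and "\<epsilon> > 0"
  shows "\<exists>c > 0. \<exists>\<rho> > 0. \<exists>C :: real. \<exists>N :: nat. \<forall>H L :: nat.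
           H + 2*L \<ge> N \<and> real H \<le> \<rho> * real (H + 2*L) \<longrightarrow>
           bad_prob TYPE('p) H L c
             \<le> C * real CARD('p) powr ((-1/2 + \<epsilon>) * real (H + 2*L))"
proof -
  define D where "D = real CARD('p)"
  have D3: "CARD('p) \<ge> 3" using prime_ge_2_nat[OF prime_card[where 'a='p]] assms(1) by linarith
  then have "0 < \<epsilon> * ln D / 2" using assms(2) unfolding D_def by simp
  then obtain c where c: "0 < c" "c < 1" "c * (ln D + 1 - ln c) < \<epsilon> * ln D / 2"
    using exists_small_entropy_rate by blast
  have "\<forall>H L. H + 2*L \<ge> 0 \<and> real H \<le> \<epsilon> * real (H + 2*L) \<longrightarrow>
      bad_prob TYPE('p) H L c \<le> 4 * real CARD('p) powr ((-1/2 + \<epsilon>) * real (H + 2*L))"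
    using bad_prob_le_powr[OF D3 c(1) less_imp_le[OF c(2)]] c(3) unfolding D_def by auto
  with c(1) assms(2) show ?thesis by blast
qed

end
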